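(* Let $P,Q\in\mathbb R[X]$ be real polynomials such that all (complex) roots of $P$ are real (respectively, all roots of $P$ lie in $\mathbb R_{\ge0}$). If there exists $c>0$ such that $|Q(t)|\le c|P(t)|$ for all $t\in\mathbb R$ (respectively, for all $t\in\mathbb R_{\ge0}$), then $Q=\kappa P$ for some $\kappa\in\mathbb R$. Moreover, if $\deg Q<\deg P$, then $Q=0$. *)

theory Defs
  imports Complex_Main "HOL-Computational_Algebra.Polynomial"
begin

end

theory Submission
  imports Defs "HOL-Computational_Algebra.Fundamental_Theorem_Algebra"
begin

text \<open>If \<open>P\<close> is constant, \<open>Q\<close> is bounded on an unbounded
  interval, hence constant. Otherwise \<open>P\<close> has a root \<open>a\<close> in the admissible set, the bound
  forces \<open>Q(a) = 0\<close>, and dividing both polynomials by \<open>X - a\<close> preserves the bound: away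
  from \<open>a\<close> by cancellation, at \<open>a\<close> itself by continuity.\<close>

lemma map_poly_of_real_add:
  "map_poly (of_real :: real \<Rightarrow> 'a::real_algebra_1) (p + q) = map_poly of_real p + map_poly of_real q"
  by (rule poly_eqI) (simp add: coeff_map_poly)

lemma map_poly_of_real_mult:
  "map_poly (of_real :: real \<Rightarrow> 'a::{real_algebra_1,comm_ring_1}) (p * q) =
     map_poly of_real p * map_poly of_real q"
  by (induction p) (auto simp: map_poly_pCons map_poly_of_real_add map_poly_smult)

lemma poly_map_poly_of_real:
  "poly (map_poly (of_real :: real \<Rightarrow> 'a::{real_algebra_1,comm_ring_1}) p) (of_real x) =
     of_real (poly p x)"
  by (induction p) (auto simp: map_poly_pCons)

lemma poly_bounded_at_top_imp_degree_0:
  fixes Q :: "real poly"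
  assumes "eventually (\<lambda>x. \<bar>poly Q x\<bar> \<le> C) at_top"
  shows "degree Q = 0"
proof (rule ccontr)
  assume "degree Q \<noteq> 0"
  then have "filterlim (poly Q) at_infinity at_top"
    using filterlim_poly_at_infinity[of Q] filterlim_mono at_top_le_at_infinity by blast
  then have "filterlim (\<lambda>x. \<bar>poly Q x\<bar>) at_top at_top"
    by (simp add: filterlim_at_infinity_conv_norm_at_top)
  then have "eventually (\<lambda>x. \<bar>poly Q x\<bar> > C) at_top"
    by (simp add: filterlim_at_top_dense)
  with assms have "eventually (\<lambda>_. False) (at_top :: real filter)"
    by eventually_elim simp
  then show False by simp
qed

lemma abs_poly_le_cancel_linear_factor:
  fixes P Q :: "real poly"
  assumes bd: "\<And>t. t \<in> S \<Longrightarrow> \<bar>poly ([:-a, 1:] * Q) t\<bar> \<le> c * \<bar>poly ([:-a, 1:] * P) t\<bar>"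
    and right: "{a<..} \<subseteq> S"
    and "t \<in> S"
  shows "\<bar>poly Q t\<bar> \<le> c * \<bar>poly P t\<bar>"
proof -
  have off_root: "\<bar>poly Q s\<bar> \<le> c * \<bar>poly P s\<bar>" if "s \<in> S" "s \<noteq> a" for s
  proof -
    have "\<bar>s - a\<bar> * \<bar>poly Q s\<bar> \<le> \<bar>s - a\<bar> * (c * \<bar>poly P s\<bar>)"
      using bd[OF \<open>s \<in> S\<close>] by (simp add: abs_mult mult.left_commute flip: left_diff_distrib)
    moreover have "\<bar>s - a\<bar> > 0" using \<open>s \<noteq> a\<close> by simp
    ultimately show ?thesis by simp
  qed
  show ?thesis
  proof (cases "t = a")
    case True
    let ?f = "\<lambda>s. c * \<bar>poly P s\<bar> - \<bar>poly Q s\<bar>"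
    have "(?f \<longlongrightarrow> ?f a) (at_right a)"
      by (intro tendsto_intros)
    moreover have "eventually (\<lambda>s. 0 \<le> ?f s) (at_right a)"
      using eventually_at_right_less[of a] by eventually_elim (use right off_root in auto)
    ultimately have "0 \<le> ?f a"
      by (rule tendsto_lowerbound) simp
    with True show ?thesis by simp
  qed (use off_root \<open>t \<in> S\<close> in blast)
qed

lemma dominated_poly_eq_smult:
  fixes P Q :: "real poly" and S :: "real set"
  assumes up: "\<And>a x. a \<in> S \<Longrightarrow> a \<le> x \<Longrightarrow> x \<in> S" and "S \<noteq> {}"
    and "\<And>z. poly (map_poly complex_of_real P) z = 0 \<Longrightarrow> z \<in> complex_of_real ` S"
    and "\<And>t. t \<in> S \<Longrightarrow> \<bar>poly Q t\<bar> \<le> c * \<bar>poly P t\<bar>"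
  shows "\<exists>k. Q = smult k P"
  using assms(3,4)
proof (induction "degree P" arbitrary: P Q rule: less_induct)
  case less
  show ?case
  proof (cases "degree P = 0")
    case True
    then obtain p where P: "P = [:p:]" by (rule degree_eq_zeroE)
    obtain b where "b \<in> S" using \<open>S \<noteq> {}\<close> by blast
    have "eventually (\<lambda>x. \<bar>poly Q x\<bar> \<le> c * \<bar>p\<bar>) at_top"
      using eventually_ge_at_top[of b] by eventually_elim (use up \<open>b \<in> S\<close> less.prems(2) P in auto)
    then obtain q where Q: "Q = [:q:]"
      using degree_eq_zeroE poly_bounded_at_top_imp_degree_0 by metis
    have "p = 0 \<Longrightarrow> q = 0" using less.prems(2)[OF \<open>b \<in> S\<close>] P Q by simp
    then have "Q = smult (q / p) P" using P Q by auto
    then show ?thesis by blast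
  next
    case False
    then have "\<not> constant (poly (map_poly complex_of_real P))"
      using constant_degree[of "map_poly complex_of_real P"] by (simp add: degree_map_poly)
    then obtain z where "poly (map_poly complex_of_real P) z = 0"
      using fundamental_theorem_of_algebra by blast
    then obtain a where "a \<in> S" and z: "z = of_real a" using less.prems(1) by blast
    have "poly P a = 0"
      using \<open>poly _ z = 0\<close> poly_map_poly_of_real[where 'a=complex, of P a] z by simp
    then obtain P' where P': "P = [:-a, 1:] * P'" using poly_eq_0_iff_dvd dvdE by blast
    have "poly Q a = 0" using less.prems(2)[OF \<open>a \<in> S\<close>] \<open>poly P a = 0\<close> by simp
    then obtain Q' where Q': "Q = [:-a, 1:] * Q'" using poly_eq_0_iff_dvd dvdE by blast
    have "P' \<noteq> 0" using P' False by auto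
    then have "degree P' < degree P" unfolding P' by (subst degree_mult_eq) auto
    moreover have "z \<in> complex_of_real ` S" if "poly (map_poly complex_of_real P') z = 0" for z
      using that less.prems(1)[of z] unfolding P' map_poly_of_real_mult poly_mult by simp
    moreover have "\<bar>poly Q' t\<bar> \<le> c * \<bar>poly P' t\<bar>" if "t \<in> S" for t
      using abs_poly_le_cancel_linear_factor[of S a Q' c P' t] less.prems(2) up[OF \<open>a \<in> S\<close>] that
      unfolding P' Q' by fastforce
    ultimately obtain k where "Q' = smult k P'" using less.hyps by blast
    then show ?thesis using P' Q' by auto
  qed
qed

theorem lemma8:
  fixes P Q :: "real poly"
  shows
   "((\<forall>z. poly (map_poly complex_of_real P) z = 0 \<longrightarrow> z \<in> \<real>) \<and>
     (\<exists>c>0. \<forall>t::real. \<bar>poly Q t\<bar> \<le> c * \<bar>poly P t\<bar>)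
     \<longrightarrow> (\<exists>\<kappa>. Q = smult \<kappa> P) \<and> (degree Q < degree P \<longrightarrow> Q = 0))
    \<and>
    ((\<forall>z. poly (map_poly complex_of_real P) z = 0 \<longrightarrow> z \<in> complex_of_real ` {0..}) \<and>
     (\<exists>c>0. \<forall>t::real. t \<ge> 0 \<longrightarrow> \<bar>poly Q t\<bar> \<le> c * \<bar>poly P t\<bar>)
     \<longrightarrow> (\<exists>\<kappa>. Q = smult \<kappa> P) \<and> (degree Q < degree P \<longrightarrow> Q = 0))"
proof -
  have degree_less: "degree Q < degree P \<longrightarrow> Q = 0" if "Q = smult \<kappa> P" for \<kappa>
    using that by (cases "\<kappa> = 0") auto
  have real_roots: "\<exists>\<kappa>. Q = smult \<kappa> P"
    if "\<forall>z. poly (map_poly complex_of_real P) z = 0 \<longrightarrow> z \<in> \<real>"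
      and "\<forall>t. \<bar>poly Q t\<bar> \<le> c * \<bar>poly P t\<bar>" for c
    using dominated_poly_eq_smult[of UNIV P Q c] that by (simp add: Reals_def)
  have nonneg_roots: "\<exists>\<kappa>. Q = smult \<kappa> P"
    if "\<forall>z. poly (map_poly complex_of_real P) z = 0 \<longrightarrow> z \<in> complex_of_real ` {0..}"
      and "\<forall>t::real. t \<ge> 0 \<longrightarrow> \<bar>poly Q t\<bar> \<le> c * \<bar>poly P t\<bar>" for c
    using dominated_poly_eq_smult[of "{0..}" P Q c] that by simp
  show ?thesis
    using real_roots nonneg_roots degree_less by blast
qed

end
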